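(* Let $T:X\to X$ be a continuous map on a Hausdorff topological space and $x\in X$. (a) For every $0<\delta\leq1$ the following are equivalent: (i) $x$ is periodic with period at most $\lfloor1/\delta\rfloor$; (ii) $x$ is $\underline{\mathcal{BD}}_\delta$-recurrent; (iii) $x$ is $\underline{\mathcal{D}}_\delta$-recurrent; (iv) $x$ is $\overline{\mathcal{D}}_\delta$-recurrent; (v) $x$ is $\overline{\mathcal{BD}}_\delta$-recurrent. In particular, if $T$ is $\overline{\mathcal{BD}}_\delta$-recurrent then $T^M=I$ for $M=\lfloor1/\delta\rfloor!$. (b) The following are equivalent: (i) $Tx=x$; (ii) $x$ is $\mathcal{I}^*$-recurrent; (iii) $x$ is $\mathcal{TS}$-recurrent; (iv) $x$ is $\mathcal{T}$-recurrent; (v) $x$ is $\overline{\mathcal{BD}}_\delta$-recurrent for some $\delta>1/2$; (vi) for every neighbourhood $U$ of $x$ the set $N(x,U)$ contains two consecutive integers.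
   Context: $N(x,U)=\{n\in\mathbb{N}_0:T^nx\in U\}$. For a family $\mathcal{F}$ of subsets of $\mathbb{N}_0$, $x$ is $\mathcal{F}$-recurrent if $N(x,U)\in\mathcal{F}$ for every neighbourhood $U$ of $x$, and $T$ is $\mathcal{F}$-recurrent if the set of $\mathcal{F}$-recurrent points is dense. Densities of $A\subset\mathbb{N}_0$: $\overline{\mathrm{Bd}}(A)=\lim_{M\to\infty}\max_{n\geq0}\frac{\#(A\cap[n+1,n+M])}{M}$, $\underline{\mathrm{Bd}}(A)=\lim_{M\to\infty}\inf_{n\geq0}\frac{\#(A\cap[n+1,n+M])}{M}$, $\overline{\mathrm{dens}}(A)=\limsup_{M}\frac{\#(A\cap[1,M])}{M}$, $\underline{\mathrm{dens}}(A)=\liminf_M\frac{\#(A\cap[1,M])}{M}$. For $0<\delta\leq1$: $\underline{\mathcal{BD}}_\delta=\{A:\underline{\mathrm{Bd}}(A)\geq\delta\}$, $\overline{\mathcal{BD}}_\delta=\{A:\overline{\mathrm{Bd}}(A)\geq\delta\}$, $\underline{\mathcal{D}}_\delta=\{A:\underline{\mathrm{dens}}(A)\geq\delta\}$, $\overline{\mathcal{D}}_\delta=\{A:\overline{\mathrm{dens}}(A)\geq\delta\}$. $\mathcal{I}^*$ is the family of cofinite subsets of $\mathbb{N}_0$; $\mathcal{T}$ is the family of thick sets ($A$ such that for every $m\in\mathbb{N}$ there is $a_m$ with $[a_m,a_m+m]\subset A$); $\mathcal{TS}$ is the family of thickly syndetic sets ($A$ such that for every $m\in\mathbb{N}$ there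 is a syndetic set $A_m$ with $A_m+[0,m]\subset A$, where syndetic means having bounded gaps). *)

theory Defs
  imports "HOL-Analysis.Analysis"
begin

definition return_set :: "('a \<Rightarrow> 'a) \<Rightarrow> 'a \<Rightarrow> 'a set \<Rightarrow> nat set" where
  "return_set T x U = {n. (T ^^ n) x \<in> U}"

definition nbhd :: "'a::topological_space set \<Rightarrow> 'a \<Rightarrow> bool" where
  "nbhd U x \<longleftrightarrow> (\<exists>V. open V \<and> x \<in> V \<and> V \<subseteq> U)"

definition F_recurrent_point :: "nat set set \<Rightarrow> ('a::topological_space \<Rightarrow> 'a) \<Rightarrow> 'a \<Rightarrow> bool" where
  "F_recurrent_point F T x \<longleftrightarrow> (\<forall>U. nbhd U x \<longrightarrow> return_set T x U \<in> F)"

definition F_recurrent :: "nat set set \<Rightarrow> ('a::topological_space \<Rightarrow> 'a) \<Rightarrow> bool" where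
  "F_recurrent F T \<longleftrightarrow> closure {x. F_recurrent_point F T x} = UNIV"

definition upper_banach_density :: "nat set \<Rightarrow> real" where
  "upper_banach_density A =
     lim (\<lambda>M. SUP n. real (card (A \<inter> {n+1..n+M})) / real M)"

definition lower_banach_density :: "nat set \<Rightarrow> real" where
  "lower_banach_density A =
     lim (\<lambda>M. INF n. real (card (A \<inter> {n+1..n+M})) / real M)"

definition upper_density :: "nat set \<Rightarrow> ereal" where
  "upper_density A = limsup (\<lambda>M. ereal (real (card (A \<inter> {1..M})) / real M))"

definition lower_density :: "nat set \<Rightarrow> ereal" where
  "lower_density A = liminf (\<lambda>M. ereal (real (card (A \<inter> {1..M})) / real M))"

definition BDl :: "real \<Rightarrow> nat set set" where
  "BDl \<delta> = {A. lower_banach_density A \<ge> \<delta>}"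

definition BDu :: "real \<Rightarrow> nat set set" where
  "BDu \<delta> = {A. upper_banach_density A \<ge> \<delta>}"

definition Dl :: "real \<Rightarrow> nat set set" where
  "Dl \<delta> = {A. lower_density A \<ge> ereal \<delta>}"

definition Du :: "real \<Rightarrow> nat set set" where
  "Du \<delta> = {A. upper_density A \<ge> ereal \<delta>}"

definition cofinite_fam :: "nat set set" where
  "cofinite_fam = {A. finite (UNIV - A)}"

definition thick_fam :: "nat set set" where
  "thick_fam = {A. \<forall>m::nat. m \<ge> 1 \<longrightarrow> (\<exists>a. {a..a+m} \<subseteq> A)}"

definition syndetic :: "nat set \<Rightarrow> bool" where
  "syndetic A \<longleftrightarrow> (\<exists>g. \<forall>n. \<exists>a\<in>A. n \<le> a \<and> a \<le> n + g)"

definition thickly_syndetic_fam :: "nat set set" where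
  "thickly_syndetic_fam = {A. \<forall>m::nat. m \<ge> 1 \<longrightarrow>
      (\<exists>B. syndetic B \<and> {b + k | b k. b \<in> B \<and> k \<le> m} \<subseteq> A)}"

definition periodic_le :: "('a \<Rightarrow> 'a) \<Rightarrow> 'a \<Rightarrow> nat \<Rightarrow> bool" where
  "periodic_le T x p \<longleftrightarrow> (\<exists>k. 1 \<le> k \<and> k \<le> p \<and> (T ^^ k) x = x)"

end

theory Submission
  imports Defs
begin

text \<open>If \<open>x\<close> has no period \<open>k \<le> p\<close>, continuity and the Hausdorff property give a
neighbourhood \<open>U\<close> of \<open>x\<close> with \<open>T\<^sup>k U \<inter> U = {}\<close> for \<open>1 \<le> k \<le> p\<close>; then two return
times to \<open>U\<close> differ by more than \<open>p\<close>, every window of \<open>p + 1\<close> consecutive integers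
contains at most one of them, and \<open>N(x,U)\<close> has upper Banach density at most \<open>1/(p+1)\<close>.
If instead \<open>T\<^sup>k x = x\<close>, every \<open>N(x,U)\<close> contains \<open>k\<nat>\<close> and so has lower Banach density
at least \<open>1/k\<close>. As lower Banach density \<open>\<le>\<close> lower density \<open>\<le>\<close> upper density \<open>\<le>\<close>
upper Banach density, the four recurrence notions of part (a) are squeezed between these
two facts. Part (b) is the case \<open>p = 1\<close>, together with the inclusions
cofinite \<open>\<subseteq>\<close> thickly syndetic \<open>\<subseteq>\<close> thick, since a thick set contains two consecutive
integers.\<close>

section \<open>Counting elements in windows\<close>

definition window_count :: "nat set \<Rightarrow> nat \<Rightarrow> nat \<Rightarrow> nat" where
  "window_count A n M = card (A \<inter> {n+1..n+M})"

lemma window_count_le: "window_count A n M \<le> M"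
proof -
  have "card (A \<inter> {n+1..n+M}) \<le> card {n+1..n+M}" by (rule card_mono) auto
  then show ?thesis by (simp add: window_count_def)
qed

lemma window_count_add: "window_count A n (M + N) = window_count A n M + window_count A (n + M) N"
proof -
  have "A \<inter> {n+1..n+(M+N)} = (A \<inter> {n+1..n+M}) \<union> (A \<inter> {n+M+1..n+M+N})" by auto
  moreover have "card ((A \<inter> {n+1..n+M}) \<union> (A \<inter> {n+M+1..n+M+N}))
      = card (A \<inter> {n+1..n+M}) + card (A \<inter> {n+M+1..n+M+N})"
    by (rule card_Un_disjoint) auto
  ultimately show ?thesis unfolding window_count_def by (simp add: add.assoc)
qed

lemma window_count_Compl: "window_count (- A) n M = M - window_count A n M"
proof -
  have "{n+1..n+M} = (A \<inter> {n+1..n+M}) \<union> (- A \<inter> {n+1..n+M})" by auto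
  moreover have "card ((A \<inter> {n+1..n+M}) \<union> (- A \<inter> {n+1..n+M}))
      = card (A \<inter> {n+1..n+M}) + card (- A \<inter> {n+1..n+M})"
    by (rule card_Un_disjoint) auto
  ultimately show ?thesis unfolding window_count_def by simp
qed

lemma window_count_mono: "M \<le> N \<Longrightarrow> window_count A n M \<le> window_count A n N"
  using window_count_add[of A n M "N - M"] by simp

lemma window_count_mult_le:
  assumes "\<And>n. window_count A n L \<le> c"
  shows "window_count A n (q * L) \<le> q * c"
proof (induction q arbitrary: n)
  case (Suc q)
  have "window_count A n (Suc q * L) = window_count A n L + window_count A (n + L) (q * L)"
    by (simp add: window_count_add)
  also have "\<dots> \<le> c + q * c" using assms Suc by (intro add_mono)
  finally show ?case by simp
qed (simp add: window_count_def)

lemma window_count_mult_ge: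
  assumes "\<And>n. c \<le> window_count A n L"
  shows "q * c \<le> window_count A n (q * L)"
proof (induction q arbitrary: n)
  case (Suc q)
  have "c + q * c \<le> window_count A n L + window_count A (n + L) (q * L)"
    using assms Suc by (intro add_mono)
  also have "\<dots> = window_count A n (Suc q * L)"
    by (simp add: window_count_add)
  finally show ?case by simp
qed simp

lemma window_frequency_le:
  assumes "L > 0" and "\<And>n. window_count A n L \<le> c"
  shows "real (window_count A n M) / real M \<le> real c / real L + real c / real M"
proof (cases "M = 0")
  case False
  have "M \<le> Suc (M div L) * L"
    using dividend_less_div_times[OF assms(1), of M] by simp
  then have "window_count A n M \<le> Suc (M div L) * c"
    using window_count_mono window_count_mult_le[OF assms(2)] le_trans by blast
  then have "real (window_count A n M) \<le> (real (M div L) + 1) * real c"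
    by (metis of_nat_Suc of_nat_le_iff of_nat_mult add.commute)
  also have "\<dots> \<le> (real M / real L + 1) * real c"
    by (intro mult_right_mono add_right_mono) (simp_all add: of_nat_div_le_of_nat)
  finally have "real (window_count A n M) / real M \<le> (real M / real L + 1) * real c / real M"
    by (rule divide_right_mono) simp
  also have "\<dots> = real c / real L + real c / real M"
    using False assms(1) by (simp add: field_simps)
  finally show ?thesis .
qed simp

lemma window_frequency_ge:
  assumes "L > 0" and "M > 0" and "\<And>n. c \<le> window_count A n L"
  shows "real c / real L - real c / real M \<le> real (window_count A n M) / real M"
proof -
  have "real (M mod L) / real L < 1"
    using assms(1) by simp
  then have "(real M / real L - 1) * real c \<le> real (M div L) * real c"
    using of_nat_of_nat_div_aux[where 'a = real, of M L] by (intro mult_right_mono) simp_all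
  also have "\<dots> \<le> real (window_count A n M)"
    using window_count_mult_ge[OF assms(3), of "M div L" n]
      window_count_mono[of "M div L * L" M A n]
    by (metis div_times_less_eq_dividend le_trans of_nat_le_iff of_nat_mult)
  finally have "(real M / real L - 1) * real c / real M \<le> real (window_count A n M) / real M"
    by (rule divide_right_mono) simp
  moreover have "(real M / real L - 1) * real c / real M = real c / real L - real c / real M"
    using assms(1,2) by (simp add: field_simps)
  ultimately show ?thesis by simp
qed

section \<open>Banach densities\<close>

text \<open>The Banach densities are defined with \<open>lim\<close>, which is meaningless unless the window
frequencies converge; Fekete's lemma below supplies the convergence.\<close>

lemma subadditive_le_mult_add:
  fixes h :: "nat \<Rightarrow> real"
  assumes "\<And>m n. h (m + n) \<le> h m + h n"
  shows "h (q * m + s) \<le> real q * h m + h s"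
proof (induction q)
  case (Suc q)
  have "h (Suc q * m + s) \<le> h m + h (q * m + s)"
    using assms[of m "q * m + s"] by (simp add: add.assoc)
  with Suc show ?case by (simp add: algebra_simps)
qed simp

lemma subadditive_quotient_le:
  fixes h :: "nat \<Rightarrow> real"
  assumes subadd: "\<And>m n. h (m + n) \<le> h m + h n" and nonneg: "\<And>n. 0 \<le> h n"
    and "m \<ge> 1" and "n > 0"
  shows "h n / real n \<le> h m / real m + Max (h ` {..<m}) / real n"
proof -
  let ?B = "Max (h ` {..<m})"
  have "h (n mod m) \<le> ?B"
    using assms(3) by (intro Max_ge) auto
  then have "h n \<le> real (n div m) * h m + ?B"
    using subadditive_le_mult_add[OF subadd, of "n div m" m "n mod m"] by simp
  also have "\<dots> \<le> real n * (h m / real m) + ?B"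
  proof -
    have "real (n div m) * real m \<le> real n"
      by (metis div_times_less_eq_dividend of_nat_le_iff of_nat_mult)
    then have "real (n div m) * real m * (h m / real m) \<le> real n * (h m / real m)"
      using nonneg by (intro mult_right_mono) auto
    then show ?thesis using assms(3) by simp
  qed
  finally show ?thesis using assms(4) by (simp add: field_simps)
qed

lemma subadditive_quotient_convergent:
  fixes h :: "nat \<Rightarrow> real"
  assumes subadd: "\<And>m n. h (m + n) \<le> h m + h n" and nonneg: "\<And>n. 0 \<le> h n"
  shows "convergent (\<lambda>n. h n / real n)"
proof -
  define L where "L = (INF n\<in>{1..}. h n / real n)"
  have bdd: "bdd_below ((\<lambda>n. h n / real n) ` {1..})"
    using nonneg by (intro bdd_belowI[of _ 0]) auto
  have L_le: "L \<le> h n / real n" if "n \<ge> 1" for n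
    unfolding L_def using bdd that by (intro cINF_lower) auto
  have "(\<lambda>n. h n / real n) \<longlonglongrightarrow> L"
  proof (rule LIMSEQ_I)
    fix r :: real assume r: "r > 0"
    obtain m where m: "m \<ge> 1" "h m / real m < L + r / 2"
      using cINF_less_iff[OF _ bdd, of "L + r / 2"] r unfolding L_def[symmetric] by auto
    obtain N :: nat where N: "2 * Max (h ` {..<m}) / r < real N"
      using reals_Archimedean2 by blast
    show "\<exists>N. \<forall>n\<ge>N. norm (h n / real n - L) < r"
    proof (intro exI[of _ "N + 1"] allI impI)
      fix n assume n: "n \<ge> N + 1"
      then have "2 * Max (h ` {..<m}) / r < real n" using N by linarith
      then have "Max (h ` {..<m}) / real n < r / 2"
        using r n by (simp add: field_simps)
      moreover have "h n / real n \<le> h m / real m + Max (h ` {..<m}) / real n"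
        using subadditive_quotient_le[OF subadd nonneg m(1)] n by simp
      moreover have "L \<le> h n / real n" using L_le n by simp
      ultimately show "norm (h n / real n - L) < r"
        using m(2) by (simp only: real_norm_def)
    qed
  qed
  then show ?thesis by (rule convergentI)
qed

definition max_window_count :: "nat set \<Rightarrow> nat \<Rightarrow> nat" where
  "max_window_count A M = Max (range (\<lambda>n. window_count A n M))"

lemma finite_range_window_count: "finite (range (\<lambda>n. window_count A n M))"
  by (rule finite_subset[of _ "{..M}"]) (auto simp: window_count_le)

lemma window_count_le_max: "window_count A n M \<le> max_window_count A M"
  unfolding max_window_count_def by (intro Max_ge finite_range_window_count) auto

lemma max_window_count_attained: "\<exists>n. window_count A n M = max_window_count A M"
proof -
  have "max_window_count A M \<in> range (\<lambda>n. window_count A n M)"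
    unfolding max_window_count_def by (intro Max_in finite_range_window_count) auto
  then show ?thesis by auto
qed

lemma max_window_count_add:
  "max_window_count A (M + N) \<le> max_window_count A M + max_window_count A N"
proof -
  obtain n where "window_count A n (M + N) = max_window_count A (M + N)"
    using max_window_count_attained by metis
  then show ?thesis
    using window_count_add[of A n M N] window_count_le_max[of A n M] window_count_le_max[of A "n + M" N]
    by simp
qed

lemma SUP_window_frequency:
  "(SUP n. real (window_count A n M) / real M) = real (max_window_count A M) / real M"
proof (rule cSup_eq_maximum)
  obtain n where "window_count A n M = max_window_count A M"
    using max_window_count_attained by metis
  then show "real (max_window_count A M) / real M \<in> range (\<lambda>n. real (window_count A n M) / real M)"
    by (metis rangeI)
qed (auto intro!: divide_right_mono simp: window_count_le_max)

lemma INF_window_frequency: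
  assumes "M > 0"
  shows "(INF n. real (window_count A n M) / real M) = 1 - real (max_window_count (- A) M) / real M"
proof -
  have "window_count A n M = M - window_count (- A) n M" for n
    using window_count_Compl[of "- A" n M] by simp
  then have freq: "(\<lambda>n. real (window_count A n M) / real M)
      = (\<lambda>n. 1 - real (window_count (- A) n M) / real M)"
    using assms by (auto simp: of_nat_diff window_count_le diff_divide_distrib)
  obtain n0 where n0: "window_count (- A) n0 M = max_window_count (- A) M"
    using max_window_count_attained by metis
  show ?thesis unfolding freq
  proof (rule cInf_eq_minimum)
    show "1 - real (max_window_count (- A) M) / real M
        \<in> range (\<lambda>n. 1 - real (window_count (- A) n M) / real M)"
      by (rule range_eqI[of _ _ n0]) (simp add: n0)
    show "1 - real (max_window_count (- A) M) / real M \<le> x"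
      if x_in: "x \<in> range (\<lambda>n. 1 - real (window_count (- A) n M) / real M)" for x
    proof -
      obtain n where x: "x = 1 - real (window_count (- A) n M) / real M"
        using x_in by blast
      have "real (window_count (- A) n M) / real M \<le> real (max_window_count (- A) M) / real M"
        by (intro divide_right_mono) (simp_all add: window_count_le_max)
      then show ?thesis using x by simp
    qed
  qed
qed

lemma upper_banach_density_LIMSEQ:
  "(\<lambda>M. SUP n. real (window_count A n M) / real M) \<longlonglongrightarrow> upper_banach_density A"
proof -
  have "convergent (\<lambda>M. real (max_window_count A M) / real M)"
    by (rule subadditive_quotient_convergent) (auto simp: max_window_count_add simp flip: of_nat_add)
  then show ?thesis
    unfolding upper_banach_density_def SUP_window_frequency window_count_def[symmetric]
    by (simp add: convergent_LIMSEQ_iff)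
qed

lemma lower_banach_density_LIMSEQ:
  "(\<lambda>M. INF n. real (window_count A n M) / real M) \<longlonglongrightarrow> lower_banach_density A"
proof -
  have "convergent (\<lambda>M. real (max_window_count (- A) M) / real M)"
    by (rule subadditive_quotient_convergent) (auto simp: max_window_count_add simp flip: of_nat_add)
  then obtain L where "(\<lambda>M. real (max_window_count (- A) M) / real M) \<longlonglongrightarrow> L"
    by (auto simp: convergent_def)
  then have "(\<lambda>M. 1 - real (max_window_count (- A) M) / real M) \<longlonglongrightarrow> 1 - L"
    by (intro tendsto_intros)
  then have "(\<lambda>M. INF n. real (window_count A n M) / real M) \<longlonglongrightarrow> 1 - L"
    by (rule Lim_transform_eventually)
      (use eventually_gt_at_top[of 0] in \<open>eventually_elim, simp add: INF_window_frequency\<close>)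
  then show ?thesis
    unfolding lower_banach_density_def window_count_def[symmetric] by (simp add: limI)
qed

lemma lower_banach_density_le_lower_density: "ereal (lower_banach_density A) \<le> lower_density A"
proof -
  have "ereal (lower_banach_density A)
      = liminf (\<lambda>M. ereal (INF n. real (window_count A n M) / real M))"
    by (intro lim_imp_Liminf[symmetric] tendsto_ereal lower_banach_density_LIMSEQ) simp
  also have "\<dots> \<le> lower_density A"
    unfolding lower_density_def
  proof (intro Liminf_mono always_eventually allI)
    fix M
    have "(INF n. real (window_count A n M) / real M) \<le> real (window_count A 0 M) / real M"
      by (intro cINF_lower bdd_belowI[of _ 0]) auto
    then show "ereal (INF n. real (window_count A n M) / real M)
        \<le> ereal (real (card (A \<inter> {1..M})) / real M)"
      by (simp add: window_count_def)
  qed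
  finally show ?thesis .
qed

lemma lower_density_le_upper_density: "lower_density A \<le> upper_density A"
  unfolding lower_density_def upper_density_def by (rule Liminf_le_Limsup) simp

lemma upper_density_le_upper_banach_density: "upper_density A \<le> ereal (upper_banach_density A)"
proof -
  have "upper_density A \<le> limsup (\<lambda>M. ereal (SUP n. real (window_count A n M) / real M))"
    unfolding upper_density_def
  proof (intro Limsup_mono always_eventually allI)
    fix M
    have "real (window_count A 0 M) / real M \<le> (SUP n. real (window_count A n M) / real M)"
      by (intro cSUP_upper bdd_aboveI[of _ 1]) (auto simp: window_count_le divide_le_eq_1)
    then show "ereal (real (card (A \<inter> {1..M})) / real M)
        \<le> ereal (SUP n. real (window_count A n M) / real M)"
      by (simp add: window_count_def)
  qed
  also have "\<dots> = ereal (upper_banach_density A)"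
    by (intro lim_imp_Limsup tendsto_ereal upper_banach_density_LIMSEQ) simp
  finally show ?thesis .
qed

lemma upper_banach_density_le:
  assumes "L > 0" and "\<And>n. window_count A n L \<le> c"
  shows "upper_banach_density A \<le> real c / real L"
proof (rule LIMSEQ_le[OF upper_banach_density_LIMSEQ])
  show "(\<lambda>M. real c / real L + real c / real M) \<longlonglongrightarrow> real c / real L"
    using tendsto_add[OF tendsto_const lim_const_over_n[of "real c"]] by simp
  show "\<exists>N. \<forall>M\<ge>N. (SUP n. real (window_count A n M) / real M) \<le> real c / real L + real c / real M"
    using window_frequency_le[OF assms] by (auto intro!: cSUP_least)
qed

lemma lower_banach_density_ge:
  assumes "L > 0" and "\<And>n. c \<le> window_count A n L"
  shows "real c / real L \<le> lower_banach_density A"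
proof (rule LIMSEQ_le[OF _ lower_banach_density_LIMSEQ])
  show "(\<lambda>M. real c / real L - real c / real M) \<longlonglongrightarrow> real c / real L"
    using tendsto_diff[OF tendsto_const lim_const_over_n[of "real c"]] by simp
  show "\<exists>N. \<forall>M\<ge>N. real c / real L - real c / real M \<le> (INF n. real (window_count A n M) / real M)"
    using window_frequency_ge[OF assms(1) _ assms(2)] by (auto intro!: exI[of _ 1] cINF_greatest)
qed

lemma BDl_subset_Dl: "BDl \<delta> \<subseteq> Dl \<delta>"
proof
  fix A assume "A \<in> BDl \<delta>"
  then have "ereal \<delta> \<le> ereal (lower_banach_density A)" by (simp add: BDl_def)
  then show "A \<in> Dl \<delta>"
    unfolding Dl_def using lower_banach_density_le_lower_density order_trans by blast
qed

lemma Dl_subset_Du: "Dl \<delta> \<subseteq> Du \<delta>"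
  unfolding Dl_def Du_def using lower_density_le_upper_density order_trans by blast

lemma Du_subset_BDu: "Du \<delta> \<subseteq> BDu \<delta>"
proof
  fix A assume "A \<in> Du \<delta>"
  then have "ereal \<delta> \<le> ereal (upper_banach_density A)"
    unfolding Du_def using upper_density_le_upper_banach_density order_trans by blast
  then show "A \<in> BDu \<delta>" by (simp add: BDu_def)
qed

definition separated :: "nat \<Rightarrow> nat set \<Rightarrow> bool" where
  "separated p A \<longleftrightarrow> (\<forall>a\<in>A. \<forall>b\<in>A. a < b \<longrightarrow> p < b - a)"

lemma separated_window_count_le:
  assumes "separated p A"
  shows "window_count A n (Suc p) \<le> 1"
proof -
  have "a = b" if "a \<in> A \<inter> {n+1..n + Suc p}" and "b \<in> A \<inter> {n+1..n + Suc p}" for a b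
  proof (rule ccontr)
    assume "a \<noteq> b"
    then consider "a < b" | "b < a" by linarith
    then show False
      using assms that unfolding separated_def by cases fastforce+
  qed
  then show ?thesis
    unfolding window_count_def by (simp add: card_le_Suc0_iff_eq)
qed

lemma multiples_window_count_ge:
  assumes "k > 0" and "\<And>j. k * j \<in> A"
  shows "1 \<le> window_count A n k"
proof -
  have "k * (n div k + 1) \<in> A \<inter> {n+1..n+k}"
    using assms(2)[of "n div k + 1"] dividend_less_times_div[OF assms(1), of n]
    by (auto simp: algebra_simps)
  then have "A \<inter> {n+1..n+k} \<noteq> {}" by blast
  then show ?thesis
    unfolding window_count_def by (simp add: Suc_le_eq card_gt_0_iff)
qed

section \<open>Return times\<close>

lemma continuous_on_funpow:
  fixes T :: "'a::topological_space \<Rightarrow> 'a"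
  assumes "continuous_on UNIV T"
  shows "continuous_on UNIV (T ^^ n)"
proof (induction n)
  case (Suc n)
  have "continuous_on UNIV (T \<circ> (T ^^ n))"
    using Suc continuous_on_subset[OF assms subset_UNIV] by (rule continuous_on_compose)
  then show ?case by simp
qed (simp add: continuous_on_id)

lemma funpow_fixed: "f x = x \<Longrightarrow> (f ^^ n) x = x"
  by (induction n) simp_all

lemma funpow_mult_fixed: "(T ^^ k) x = x \<Longrightarrow> (T ^^ (k * j)) x = x"
  using funpow_fixed[of "T ^^ k" x j] by (simp add: funpow_mult)

lemma periodic_le_Suc_0_iff: "periodic_le T x (Suc 0) \<longleftrightarrow> T x = x"
  unfolding periodic_le_def by (auto simp: le_Suc_eq)

lemma F_recurrent_point_mono: "F \<subseteq> G \<Longrightarrow> F_recurrent_point F T x \<Longrightarrow> F_recurrent_point G T x"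
  unfolding F_recurrent_point_def by blast

lemma exists_open_return_set_separated:
  fixes T :: "'a::t2_space \<Rightarrow> 'a"
  assumes cont: "continuous_on UNIV T" and not_periodic: "\<not> periodic_le T x p"
  shows "\<exists>U. open U \<and> x \<in> U \<and> separated p (return_set T x U)"
proof -
  have "\<exists>V. open V \<and> x \<in> V \<and> (\<forall>y\<in>V. (T ^^ k) y \<notin> V)" if k: "k \<in> {1..p}" for k
  proof -
    have "x \<noteq> (T ^^ k) x" using not_periodic k unfolding periodic_le_def by auto
    from hausdorff[OF this]
    obtain V W where VW: "open V" "open W" "x \<in> V" "(T ^^ k) x \<in> W" "V \<inter> W = {}"
      by blast
    have "open (V \<inter> (T ^^ k) -` W)"
      using VW continuous_on_funpow[OF cont, of k] by (intro open_Int open_vimage) auto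
    moreover have "\<forall>y\<in>V \<inter> (T ^^ k) -` W. (T ^^ k) y \<notin> V \<inter> (T ^^ k) -` W"
      using VW by blast
    ultimately show ?thesis using VW by blast
  qed
  then obtain V where V: "\<And>k. k \<in> {1..p} \<Longrightarrow> open (V k) \<and> x \<in> V k \<and> (\<forall>y\<in>V k. (T ^^ k) y \<notin> V k)"
    by metis
  define U where "U = (\<Inter>k\<in>{1..p}. V k)"
  have "separated p (return_set T x U)"
    unfolding separated_def
  proof (intro ballI impI)
    fix a b assume a: "a \<in> return_set T x U" and b: "b \<in> return_set T x U" and "a < b"
    show "p < b - a"
    proof (rule ccontr)
      assume "\<not> p < b - a"
      with \<open>a < b\<close> have k: "b - a \<in> {1..p}" by auto
      have "(T ^^ (b - a)) ((T ^^ a) x) = (T ^^ b) x"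
        using \<open>a < b\<close> funpow_add[of "b - a" a T] by simp
      moreover have "(T ^^ a) x \<in> V (b - a)" "(T ^^ b) x \<in> V (b - a)"
        using a b k by (auto simp: return_set_def U_def)
      ultimately show False using V[OF k] by metis
    qed
  qed
  moreover have "open U" "x \<in> U" using V by (auto simp: U_def)
  ultimately show ?thesis by blast
qed

lemma BDl_recurrent_if_periodic:
  assumes "k > 0" and "(T ^^ k) x = x" and "\<delta> \<le> 1 / real k"
  shows "F_recurrent_point (BDl \<delta>) T x"
  unfolding F_recurrent_point_def BDl_def
proof (intro allI impI CollectI)
  fix U assume "nbhd U x"
  then have "k * j \<in> return_set T x U" for j
    using funpow_mult_fixed[OF assms(2)] by (auto simp: nbhd_def return_set_def)
  then have "1 / real k \<le> lower_banach_density (return_set T x U)"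
    using lower_banach_density_ge[OF assms(1) multiples_window_count_ge[OF assms(1)]] by simp
  with assms(3) show "\<delta> \<le> lower_banach_density (return_set T x U)" by linarith
qed

lemma periodic_le_if_BDu_recurrent:
  fixes T :: "'a::t2_space \<Rightarrow> 'a"
  assumes "continuous_on UNIV T" and "F_recurrent_point (BDu \<delta>) T x" and "1 / real (Suc p) < \<delta>"
  shows "periodic_le T x p"
proof (rule ccontr)
  assume "\<not> periodic_le T x p"
  then obtain U where U: "open U" "x \<in> U" "separated p (return_set T x U)"
    using exists_open_return_set_separated[OF assms(1)] by blast
  have "upper_banach_density (return_set T x U) \<le> 1 / real (Suc p)"
    using upper_banach_density_le[of "Suc p" _ 1] separated_window_count_le[OF U(3)] by simp
  moreover have "\<delta> \<le> upper_banach_density (return_set T x U)"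
    using assms(2) U(1,2) by (auto simp: F_recurrent_point_def BDu_def nbhd_def)
  ultimately show False using assms(3) by linarith
qed

lemma le_inverse_if_le_nat_floor_inverse:
  fixes \<delta> :: real
  assumes "0 < \<delta>" and "0 < k" and "k \<le> nat \<lfloor>1 / \<delta>\<rfloor>"
  shows "\<delta> \<le> 1 / real k"
proof -
  have "real k \<le> real (nat \<lfloor>1 / \<delta>\<rfloor>)" using assms(3) by simp
  also have "\<dots> = of_int \<lfloor>1 / \<delta>\<rfloor>" using assms(1) by simp
  also have "\<dots> \<le> 1 / \<delta>" by (rule of_int_floor_le)
  finally have "real k \<le> 1 / \<delta>" .
  then show ?thesis using assms(1,2) by (simp add: field_simps)
qed

lemma inverse_Suc_nat_floor_inverse_less:
  fixes \<delta> :: real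
  assumes "0 < \<delta>"
  shows "1 / real (Suc (nat \<lfloor>1 / \<delta>\<rfloor>)) < \<delta>"
proof -
  let ?q = "real (Suc (nat \<lfloor>1 / \<delta>\<rfloor>))"
  have "1 / \<delta> < ?q" by linarith
  then have "1 < \<delta> * ?q" using assms by (simp add: pos_divide_less_eq mult.commute)
  moreover have "0 < ?q" by simp
  ultimately show ?thesis by (metis pos_divide_less_eq mult.commute)
qed

lemma funpow_fact_eq_id_if_BDu_recurrent:
  fixes T :: "'a::t2_space \<Rightarrow> 'a"
  assumes cont: "continuous_on UNIV T" and "0 < \<delta>" and "F_recurrent (BDu \<delta>) T"
  shows "T ^^ fact (nat \<lfloor>1 / \<delta>\<rfloor>) = id"
proof -
  let ?p = "nat \<lfloor>1 / \<delta>\<rfloor>"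
  have "{y. F_recurrent_point (BDu \<delta>) T y} \<subseteq> {y. (T ^^ fact ?p) y = id y}"
  proof safe
    fix y assume "F_recurrent_point (BDu \<delta>) T y"
    then obtain k where k: "1 \<le> k" "k \<le> ?p" "(T ^^ k) y = y"
      using periodic_le_if_BDu_recurrent[OF cont _ inverse_Suc_nat_floor_inverse_less[OF assms(2)]]
      by (auto simp: periodic_le_def)
    then obtain j where "fact ?p = k * j" using dvd_fact by blast
    then show "(T ^^ fact ?p) y = id y" using funpow_mult_fixed[OF k(3)] by simp
  qed
  moreover have "closed {y. (T ^^ fact ?p) y = id y}"
    by (intro closed_Collect_eq continuous_on_funpow[OF cont] continuous_on_id')
  ultimately have "closure {y. F_recurrent_point (BDu \<delta>) T y} \<subseteq> {y. (T ^^ fact ?p) y = id y}"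
    by (rule closure_minimal)
  with assms(3) have "\<forall>y. (T ^^ fact ?p) y = y" by (auto simp: F_recurrent_def)
  then show ?thesis by (simp add: fun_eq_iff)
qed

lemma cofinite_fam_subset_thickly_syndetic_fam: "cofinite_fam \<subseteq> thickly_syndetic_fam"
proof
  fix A assume "A \<in> cofinite_fam"
  then obtain N where "\<forall>n\<in>UNIV - A. n \<le> N"
    unfolding cofinite_fam_def using finite_nat_set_iff_bounded_le by blast
  then have N: "n \<in> A" if "N < n" for n using that by force
  have "syndetic {N<..}"
    unfolding syndetic_def
  proof (intro exI allI)
    show "\<exists>a\<in>{N<..}. n \<le> a \<and> a \<le> n + Suc N" for n
      by (intro bexI[of _ "max n (Suc N)"]) auto
  qed
  moreover have "{b + k | b k. b \<in> {N<..} \<and> k \<le> m} \<subseteq> A" for m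
    using N by auto
  ultimately show "A \<in> thickly_syndetic_fam"
    unfolding thickly_syndetic_fam_def by blast
qed

lemma thickly_syndetic_fam_subset_thick_fam: "thickly_syndetic_fam \<subseteq> thick_fam"
proof
  fix A assume A: "A \<in> thickly_syndetic_fam"
  show "A \<in> thick_fam" unfolding thick_fam_def
  proof (intro CollectI allI impI)
    fix m :: nat assume "m \<ge> 1"
    then obtain B where B: "syndetic B" "{b + k | b k. b \<in> B \<and> k \<le> m} \<subseteq> A"
      using A by (auto simp: thickly_syndetic_fam_def)
    obtain b where "b \<in> B" using B(1) by (auto simp: syndetic_def)
    have "{b..b + m} \<subseteq> A"
    proof
      fix n assume "n \<in> {b..b + m}"
      then have "n = b + (n - b) \<and> n - b \<le> m" by auto
      then show "n \<in> A" using B(2) \<open>b \<in> B\<close> by blast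
    qed
    then show "\<exists>a. {a..a + m} \<subseteq> A" by blast
  qed
qed

lemma thick_fam_consecutive:
  assumes "A \<in> thick_fam"
  shows "\<exists>n. n \<in> A \<and> Suc n \<in> A"
proof -
  obtain a where "{a..a + 1} \<subseteq> A" using assms by (auto simp: thick_fam_def)
  then show ?thesis by (intro exI[of _ a]) auto
qed

lemma fixed_point_if_consecutive_returns:
  fixes T :: "'a::t2_space \<Rightarrow> 'a"
  assumes "continuous_on UNIV T"
    and "\<And>U. nbhd U x \<Longrightarrow> \<exists>n. n \<in> return_set T x U \<and> Suc n \<in> return_set T x U"
  shows "T x = x"
proof (rule ccontr)
  assume "T x \<noteq> x"
  then have "\<not> periodic_le T x (Suc 0)" by (simp add: periodic_le_Suc_0_iff)
  then obtain U where U: "open U" "x \<in> U" "separated (Suc 0) (return_set T x U)"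
    using exists_open_return_set_separated[OF assms(1)] by blast
  then obtain n where "n \<in> return_set T x U" "Suc n \<in> return_set T x U"
    using assms(2)[of U] by (auto simp: nbhd_def)
  with U(3) have "Suc 0 < Suc n - n" unfolding separated_def by blast
  then show False by simp
qed

lemma cofinite_recurrent_if_fixed_point:
  assumes "T x = x"
  shows "F_recurrent_point cofinite_fam T x"
  unfolding F_recurrent_point_def cofinite_fam_def
proof (intro allI impI CollectI)
  fix U assume "nbhd U x"
  then have "return_set T x U = UNIV"
    using funpow_fixed[of T x, OF assms] by (auto simp: nbhd_def return_set_def)
  then show "finite (UNIV - return_set T x U)" by simp
qed

lemma periodic_le_iff_density_recurrent:
  fixes T :: "'a::t2_space \<Rightarrow> 'a"
  assumes cont: "continuous_on UNIV T" and "0 < \<delta>"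
  defines "p \<equiv> nat \<lfloor>1 / \<delta>\<rfloor>"
  shows "(periodic_le T x p \<longleftrightarrow> F_recurrent_point (BDl \<delta>) T x) \<and>
         (periodic_le T x p \<longleftrightarrow> F_recurrent_point (Dl \<delta>) T x) \<and>
         (periodic_le T x p \<longleftrightarrow> F_recurrent_point (Du \<delta>) T x) \<and>
         (periodic_le T x p \<longleftrightarrow> F_recurrent_point (BDu \<delta>) T x)"
proof -
  have "F_recurrent_point (BDl \<delta>) T x" if periodic: "periodic_le T x p"
  proof -
    obtain k where k: "1 \<le> k" "k \<le> p" "(T ^^ k) x = x"
      using periodic by (auto simp: periodic_le_def)
    from k(1) have "0 < k" by simp
    from le_inverse_if_le_nat_floor_inverse[OF assms(2) this k(2)[unfolded p_def]]
    show ?thesis by (rule BDl_recurrent_if_periodic[OF \<open>0 < k\<close> k(3)])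
  qed
  moreover have "F_recurrent_point (BDl \<delta>) T x \<Longrightarrow> F_recurrent_point (Dl \<delta>) T x"
    by (rule F_recurrent_point_mono[OF BDl_subset_Dl])
  moreover have "F_recurrent_point (Dl \<delta>) T x \<Longrightarrow> F_recurrent_point (Du \<delta>) T x"
    by (rule F_recurrent_point_mono[OF Dl_subset_Du])
  moreover have "F_recurrent_point (Du \<delta>) T x \<Longrightarrow> F_recurrent_point (BDu \<delta>) T x"
    by (rule F_recurrent_point_mono[OF Du_subset_BDu])
  moreover have "F_recurrent_point (BDu \<delta>) T x \<Longrightarrow> periodic_le T x p"
    unfolding p_def
    by (rule periodic_le_if_BDu_recurrent[OF cont _ inverse_Suc_nat_floor_inverse_less[OF assms(2)]])
  ultimately show ?thesis by blast
qed

lemma fixed_point_iff_recurrent: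
  fixes T :: "'a::t2_space \<Rightarrow> 'a"
  assumes cont: "continuous_on UNIV T"
  shows "(T x = x \<longleftrightarrow> F_recurrent_point cofinite_fam T x) \<and>
         (T x = x \<longleftrightarrow> F_recurrent_point thickly_syndetic_fam T x) \<and>
         (T x = x \<longleftrightarrow> F_recurrent_point thick_fam T x) \<and>
         (T x = x \<longleftrightarrow> (\<exists>\<delta>::real. 1/2 < \<delta> \<and> \<delta> \<le> 1 \<and> F_recurrent_point (BDu \<delta>) T x)) \<and>
         (T x = x \<longleftrightarrow> (\<forall>U. nbhd U x \<longrightarrow> (\<exists>n. n \<in> return_set T x U \<and> Suc n \<in> return_set T x U)))"
proof -
  have "T x = x \<Longrightarrow> F_recurrent_point cofinite_fam T x"
    by (rule cofinite_recurrent_if_fixed_point)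
  moreover have "F_recurrent_point cofinite_fam T x \<Longrightarrow> F_recurrent_point thickly_syndetic_fam T x"
    by (rule F_recurrent_point_mono[OF cofinite_fam_subset_thickly_syndetic_fam])
  moreover have "F_recurrent_point thickly_syndetic_fam T x \<Longrightarrow> F_recurrent_point thick_fam T x"
    by (rule F_recurrent_point_mono[OF thickly_syndetic_fam_subset_thick_fam])
  moreover have "F_recurrent_point thick_fam T x \<Longrightarrow>
      \<forall>U. nbhd U x \<longrightarrow> (\<exists>n. n \<in> return_set T x U \<and> Suc n \<in> return_set T x U)"
    using thick_fam_consecutive by (auto simp: F_recurrent_point_def)
  moreover have "(\<forall>U. nbhd U x \<longrightarrow> (\<exists>n. n \<in> return_set T x U \<and> Suc n \<in> return_set T x U))
      \<Longrightarrow> T x = x"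
    using fixed_point_if_consecutive_returns[OF cont] by blast
  moreover have "T x = x \<Longrightarrow> \<exists>\<delta>::real. 1/2 < \<delta> \<and> \<delta> \<le> 1 \<and> F_recurrent_point (BDu \<delta>) T x"
    using periodic_le_iff_density_recurrent[OF cont, of 1 x] periodic_le_Suc_0_iff[of T x]
    by (intro exI[of _ 1]) simp
  moreover have "T x = x" if "1/2 < \<delta>" and "F_recurrent_point (BDu \<delta>) T x" for \<delta> :: real
    using periodic_le_if_BDu_recurrent[OF cont that(2), of "Suc 0"] that(1)
    by (simp add: periodic_le_Suc_0_iff)
  ultimately show ?thesis by blast
qed

theorem mainTheorem12:
  fixes T :: "'a::t2_space \<Rightarrow> 'a" and x :: 'a
  assumes "continuous_on UNIV T"
  shows
    "(\<forall>\<delta>::real. 0 < \<delta> \<and> \<delta> \<le> 1 \<longrightarrow>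
        (periodic_le T x (nat \<lfloor>1 / \<delta>\<rfloor>) \<longleftrightarrow> F_recurrent_point (BDl \<delta>) T x) \<and>
        (periodic_le T x (nat \<lfloor>1 / \<delta>\<rfloor>) \<longleftrightarrow> F_recurrent_point (Dl \<delta>) T x) \<and>
        (periodic_le T x (nat \<lfloor>1 / \<delta>\<rfloor>) \<longleftrightarrow> F_recurrent_point (Du \<delta>) T x) \<and>
        (periodic_le T x (nat \<lfloor>1 / \<delta>\<rfloor>) \<longleftrightarrow> F_recurrent_point (BDu \<delta>) T x))
     \<and> (\<forall>\<delta>::real. 0 < \<delta> \<and> \<delta> \<le> 1 \<longrightarrow> F_recurrent (BDu \<delta>) T \<longrightarrow>
          T ^^ fact (nat \<lfloor>1 / \<delta>\<rfloor>) = id)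
     \<and> ((T x = x \<longleftrightarrow> F_recurrent_point cofinite_fam T x) \<and>
        (T x = x \<longleftrightarrow> F_recurrent_point thickly_syndetic_fam T x) \<and>
        (T x = x \<longleftrightarrow> F_recurrent_point thick_fam T x) \<and>
        (T x = x \<longleftrightarrow> (\<exists>\<delta>::real. 1/2 < \<delta> \<and> \<delta> \<le> 1 \<and> F_recurrent_point (BDu \<delta>) T x)) \<and>
        (T x = x \<longleftrightarrow> (\<forall>U. nbhd U x \<longrightarrow> (\<exists>n. n \<in> return_set T x U \<and> Suc n \<in> return_set T x U))))"
  using periodic_le_iff_density_recurrent[OF assms] funpow_fact_eq_id_if_BDu_recurrent[OF assms]
    fixed_point_iff_recurrent[OF assms]
  by blast

end
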